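(* Let $p$ be a prime and $\psi\in\mathbb{C}_p(z)$ a nonconstant rational map, and let $x\in\mathbb{C}_p\setminus\mathrm{Crit}(\psi)$. Let $D\subset\mathbb{C}_p$ be an open disk containing $x$ such that $D\cap\mathrm{Crit}(\psi)=\emptyset$ and $\infty\notin\psi(D)$. Then $$|\psi'(x)|\ge\frac{p^{-\delta_{\max}d'}\,\mathrm{diam}(\psi(D))}{p^{-\delta_{\max}}\,\mathrm{diam}(D)},$$ where $\delta_{\max}=\frac{1}{p-1}$ and $d'\ge1$ is the degree of $\psi$ on $D$.
   Context: $\mathbb{C}_p$ is the completion of an algebraic closure of $\mathbb{Q}_p$ with its non-archimedean absolute value $|\cdot|$; disks and diameters are with respect to $|\cdot|$. $\mathrm{Crit}(\psi)$ is the set of critical points of $\psi$ in $\mathbb{P}^1_{\mathbb{C}_p}$. The degree of $\psi$ on $D$ is the number of preimages in $D$, counted with multiplicity, of a point of $\psi(D)$. *)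

theory Defs
  imports "HOL-Computational_Algebra.Computational_Algebra"
begin

text \<open>C_p is modelled abstractly: a field 'a with an absolute value absv
characterising it up to isometric isomorphism as the completion of an
algebraic closure of Q_p.\<close>

definition is_Cp :: "nat \<Rightarrow> ('a::field \<Rightarrow> real) \<Rightarrow> bool" where
  "is_Cp p absv \<longleftrightarrow>
     prime p \<and>
     (\<forall>x. absv x \<ge> 0) \<and> (\<forall>x. absv x = 0 \<longleftrightarrow> x = 0) \<and>
     (\<forall>x y. absv (x * y) = absv x * absv y) \<and>
     (\<forall>x y. absv (x + y) \<le> max (absv x) (absv y)) \<and>
     (\<forall>m::nat. m > 0 \<longrightarrow> absv (of_nat m) = 1 / real p ^ multiplicity p m) \<and>
     (\<forall>X::nat \<Rightarrow> 'a. (\<forall>e>0. \<exists>N. \<forall>m\<ge>N. \<forall>n\<ge>N. absv (X m - X n) < e) \<longrightarrow>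
         (\<exists>L. \<forall>e>0. \<exists>N. \<forall>n\<ge>N. absv (X n - L) < e)) \<and>
     (\<forall>q::'a poly. degree q > 0 \<longrightarrow> (\<exists>z. poly q z = 0)) \<and>
     (\<forall>x e. e > 0 \<longrightarrow> (\<exists>y. (\<exists>q::int poly. q \<noteq> 0 \<and> poly (map_poly of_int q) y = 0)
                                 \<and> absv (x - y) < e))"

definition open_disk :: "('a \<Rightarrow> real) \<Rightarrow> 'a::field \<Rightarrow> real \<Rightarrow> 'a set" where
  "open_disk absv a r = {z. absv (z - a) < r}"

definition diam_abs :: "('a \<Rightarrow> real) \<Rightarrow> 'a::field set \<Rightarrow> real" where
  "diam_abs absv S = Sup {absv (u - v) | u v. u \<in> S \<and> v \<in> S}"

text \<open>Rational map psi = P/Q in lowest terms; value and derivative at finite non-poles.\<close>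
definition rat_eval :: "'a::field poly \<Rightarrow> 'a poly \<Rightarrow> 'a \<Rightarrow> 'a" where
  "rat_eval P Q z = poly P z / poly Q z"

definition rat_deriv :: "'a::field poly \<Rightarrow> 'a poly \<Rightarrow> 'a \<Rightarrow> 'a" where
  "rat_deriv P Q z = poly (pderiv P * Q - P * pderiv Q) z / (poly Q z)^2"

definition crit_finite :: "'a::field poly \<Rightarrow> 'a poly \<Rightarrow> 'a set" where
  "crit_finite P Q = {z. (poly Q z \<noteq> 0 \<and> poly (pderiv P * Q - P * pderiv Q) z = 0)
                       \<or> (poly Q z = 0 \<and> order z Q \<ge> 2)}"

definition preimage_count :: "'a::field poly \<Rightarrow> 'a poly \<Rightarrow> 'a set \<Rightarrow> 'a \<Rightarrow> nat" where
  "preimage_count P Q D y = (\<Sum>z\<in>{z\<in>D. poly P z = y * poly Q z}. order z (P - smult y Q))"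

definition degree_on :: "'a::field poly \<Rightarrow> 'a poly \<Rightarrow> 'a set \<Rightarrow> nat" where
  "degree_on P Q D = preimage_count P Q D (SOME y. y \<in> rat_eval P Q ` D)"

end

(*
  Nothing but the ultrametric inequality and algebraic closedness is needed until the
  last step. Choose c in D with psi(c) = y, the value defining the degree n, and split
  P - y Q = F * Go, where F carries the n zeros lying in D. On D = D(c, r) a zero-free
  polynomial has Gauss norm equal to its value at c, hence constant absolute value,
  while F shifted to c is monic with strictly dominant leading term. So the n-th Taylor
  coefficient a of psi - y at c satisfies |a| = |Go(c) / Q(c)| and |psi - y| <= |a| r^n
  on D. The (n-1)-st Taylor coefficient of psi' = W / Q^2, where W = P' Q - P Q', is n a,
  and the Gauss norm of W / Q^2 is |W(c) / Q(c)^2| = |psi'(x)|; hence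
  |n| diam psi(D) <= r |psi'(x)|.
  In C_p, finally, |n| >= p^(-(n - 1) / (p - 1)), and diam D = r because the value
  group contains the dense group p^Q.
*)

theory Submission
  imports Defs
begin

lemma poly_factor_roots:
  fixes G :: "'a::field poly"
  assumes "finite Z" and "G \<noteq> 0"
  obtains Go where "G = (\<Prod>z\<in>Z. [:- z, 1:] ^ order z G) * Go"
    and "\<And>z. z \<in> Z \<Longrightarrow> poly Go z \<noteq> 0"
proof -
  have "\<exists>Go. G = (\<Prod>z\<in>Z. [:- z, 1:] ^ order z G) * Go \<and> (\<forall>z\<in>Z. poly Go z \<noteq> 0)"
    using assms(1)
  proof (induction Z rule: finite_induct)
    case empty
    show ?case by simp
  next
    case (insert w Z)
    define Gin where "Gin = (\<Prod>z\<in>Z. [:- z, 1:] ^ order z G)"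
    obtain Go where G: "G = Gin * Go" and Go: "\<forall>z\<in>Z. poly Go z \<noteq> 0"
      using insert.IH unfolding Gin_def by blast
    have "Gin \<noteq> 0" "Go \<noteq> 0"
      using G assms(2) by auto
    have "poly Gin w \<noteq> 0"
      using insert.hyps unfolding Gin_def poly_prod by (simp add: prod_zero_iff)
    then have order_w: "order w G = order w Go"
      using order_mult[of Gin Go w] G \<open>Gin \<noteq> 0\<close> \<open>Go \<noteq> 0\<close> by (simp add: order_root)
    obtain Go' where Go': "Go = [:- w, 1:] ^ order w Go * Go'" and "\<not> [:- w, 1:] dvd Go'"
      using order_decomp[OF \<open>Go \<noteq> 0\<close>] by blast
    have "G = Gin * ([:- w, 1:] ^ order w Go * Go')"
      using G Go' by simp
    also have "\<dots> = (\<Prod>z\<in>insert w Z. [:- z, 1:] ^ order z G) * Go'"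
      using insert.hyps order_w unfolding Gin_def by (simp add: mult_ac)
    moreover have "poly Go' w \<noteq> 0"
      using \<open>\<not> [:- w, 1:] dvd Go'\<close> by (simp add: poly_eq_0_iff_dvd)
    moreover have "\<forall>z\<in>Z. poly Go' z \<noteq> 0"
      using Go Go' by (metis mult_zero_right poly_mult)
    ultimately show ?case
      by blast
  qed
  then show ?thesis
    using that by blast
qed

lemma rat_map_nonconstant:
  fixes P Q :: "'a::field poly"
  assumes "coprime P Q" and "degree P \<ge> 1 \<or> degree Q \<ge> 1"
  shows "P - smult y Q \<noteq> 0"
proof
  assume "P - smult y Q = 0"
  then have P: "P = smult y Q"
    by simp
  then have "is_unit Q"
    using assms(1) coprime_common_divisor[of P Q Q] by (simp add: dvd_smult)
  then have "degree Q = 0"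
    using is_unit_iff_degree[of Q] by (cases "Q = 0") auto
  moreover have "degree P \<le> degree Q"
    unfolding P by (rule degree_smult_le)
  ultimately show False
    using assms(2) by simp
qed

lemma preimage_count_pos:
  assumes G: "P - smult y Q \<noteq> 0" and "c \<in> D" and "poly P c = y * poly Q c"
  shows "1 \<le> preimage_count P Q D y"
proof -
  have "finite {z \<in> D. poly P z = y * poly Q z}"
    using poly_roots_finite[OF G] by (rule finite_subset[rotated]) auto
  moreover have "1 \<le> order c (P - smult y Q)"
    using assms order_root[of "P - smult y Q" c] by (simp add: Suc_le_eq)
  moreover have "order c (P - smult y Q) \<le> preimage_count P Q D y"
    unfolding preimage_count_def using assms(2,3) calculation(1) by (intro member_le_sum) auto
  ultimately show ?thesis
    by linarith
qed

lemma pcompose_power: "pcompose (p ^ k) q = pcompose p q ^ k"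
  by (induction k) (simp_all add: pcompose_1 pcompose_mult)

section \<open>Non-archimedean absolute values\<close>

locale nonarch_abs =
  fixes absv :: "'a::field \<Rightarrow> real"
  assumes absv_nonneg [simp]: "absv x \<ge> 0"
    and absv_eq_0_iff [simp]: "absv x = 0 \<longleftrightarrow> x = 0"
    and absv_mult: "absv (x * y) = absv x * absv y"
    and absv_add_le_max: "absv (x + y) \<le> max (absv x) (absv y)"
begin

lemma absv_0 [simp]: "absv 0 = 0"
  by simp

lemma absv_pos: "x \<noteq> 0 \<Longrightarrow> absv x > 0"
  using absv_nonneg[of x] absv_eq_0_iff[of x] by linarith

lemma absv_1 [simp]: "absv 1 = 1"
  using absv_mult[of 1 1] absv_pos[of 1] by simp

lemma absv_minus [simp]: "absv (- x) = absv x"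
proof -
  have "absv (-1) * absv (-1) = 1"
    using absv_mult[of "-1" "-1"] by simp
  then have "absv (-1) = 1"
    using absv_nonneg[of "-1"] by (metis abs_of_nonneg abs_square_eq_1 power2_eq_square)
  then show ?thesis
    using absv_mult[of "-1" x] by simp
qed

lemma absv_minus_commute: "absv (x - y) = absv (y - x)"
  by (metis absv_minus minus_diff_eq)

lemma absv_diff_le_max: "absv (x - y) \<le> max (absv x) (absv y)"
  using absv_add_le_max[of x "- y"] by simp

lemma absv_power: "absv (x ^ k) = absv x ^ k"
  by (induction k) (simp_all add: absv_mult)

lemma absv_inverse: "absv (inverse x) = inverse (absv x)"
  by (cases "x = 0") (simp_all add: absv_mult[symmetric] field_simps)

lemma absv_power_int: "absv (x powi k) = absv x powi k"
  by (simp add: power_int_def absv_power absv_inverse power_inverse)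

lemma absv_divide: "absv (x / y) = absv x / absv y"
  by (simp add: divide_inverse absv_mult absv_inverse)

lemma absv_add_eq_left: "absv y < absv x \<Longrightarrow> absv (x + y) = absv x"
  using absv_add_le_max[of x y] absv_diff_le_max[of "x + y" y] by auto

lemma absv_sum_le:
  "(\<And>i. i \<in> S \<Longrightarrow> absv (f i) \<le> c) \<Longrightarrow> 0 \<le> c \<Longrightarrow> absv (sum f S) \<le> c"
proof (induction S rule: infinite_finite_induct)
  case (insert i S)
  then show ?case
    using absv_add_le_max[of "f i" "sum f S"] by fastforce
qed simp_all

lemma absv_sum_less:
  "(\<And>i. i \<in> S \<Longrightarrow> absv (f i) < c) \<Longrightarrow> 0 < c \<Longrightarrow> absv (sum f S) < c"
proof (induction S rule: infinite_finite_induct)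
  case (insert i S)
  then show ?case
    using absv_add_le_max[of "f i" "sum f S"] by fastforce
qed simp_all

lemma open_disk_iff: "z \<in> open_disk absv c r \<longleftrightarrow> absv (z - c) < r"
  by (simp add: open_disk_def)

lemma open_disk_recenter:
  assumes "b \<in> open_disk absv a r"
  shows "open_disk absv a r = open_disk absv b r"
proof -
  have "absv (z - a) < r \<longleftrightarrow> absv (z - b) < r" for z
    using assms absv_diff_le_max[of "z - a" "b - a"] absv_diff_le_max[of "z - b" "a - b"]
    by (auto simp: open_disk_iff absv_minus_commute[of a b])
  then show ?thesis
    by (auto simp: open_disk_iff)
qed

lemma absv_diff_le_of_center:
  "absv (u - c) \<le> R \<Longrightarrow> absv (v - c) \<le> R \<Longrightarrow> absv (u - v) \<le> R"
  using absv_diff_le_max[of "u - c" "v - c"] by simp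

lemma diam_abs_le:
  assumes "S \<noteq> {}" and "\<And>u. u \<in> S \<Longrightarrow> absv (u - c) \<le> R"
  shows "diam_abs absv S \<le> R"
  unfolding diam_abs_def
proof (rule cSup_least)
  fix d assume "d \<in> {absv (u - v) |u v. u \<in> S \<and> v \<in> S}"
  then show "d \<le> R"
    using assms(2) absv_diff_le_of_center by blast
qed (use assms(1) in blast)

lemma diam_abs_ge:
  assumes "\<And>u. u \<in> S \<Longrightarrow> absv (u - c) \<le> R" and "u \<in> S" and "v \<in> S"
  shows "absv (u - v) \<le> diam_abs absv S"
  unfolding diam_abs_def
proof (rule cSup_upper)
  show "bdd_above {absv (u - v) |u v. u \<in> S \<and> v \<in> S}"
    using assms(1) absv_diff_le_of_center by (intro bdd_aboveI[of _ R]) blast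
qed (use assms(2,3) in blast)

subsection \<open>Gauss norms of power series\<close>

definition gauss_norm_le :: "real \<Rightarrow> 'a fps \<Rightarrow> real \<Rightarrow> bool" where
  "gauss_norm_le r f c \<longleftrightarrow> (\<forall>k. absv (f $ k) * r ^ k \<le> c)"

lemma gauss_norm_le_nonneg: "gauss_norm_le r f c \<Longrightarrow> 0 \<le> c"
  unfolding gauss_norm_le_def by (metis absv_nonneg mult_1_right order_trans power_0)

lemma gauss_norm_le_mult:
  assumes r: "0 < r" and f: "gauss_norm_le r f a" and g: "gauss_norm_le r g b"
  shows "gauss_norm_le r (f * g) (a * b)"
  unfolding gauss_norm_le_def
proof
  fix k
  have "absv (f $ i * g $ (k - i)) * r ^ k \<le> a * b" if "i \<le> k" for i
  proof -
    have "absv (f $ i * g $ (k - i)) * r ^ k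
        = (absv (f $ i) * r ^ i) * (absv (g $ (k - i)) * r ^ (k - i))"
      using that by (simp add: absv_mult power_add[symmetric] mult_ac)
    also have "\<dots> \<le> a * b"
      using f g r gauss_norm_le_nonneg[OF f] unfolding gauss_norm_le_def
      by (intro mult_mono) auto
    finally show ?thesis .
  qed
  then have "absv ((f * g) $ k) \<le> a * b / r ^ k"
    unfolding fps_mult_nth using r gauss_norm_le_nonneg[OF f] gauss_norm_le_nonneg[OF g]
    by (intro absv_sum_le) (auto simp: pos_le_divide_eq)
  then show "absv ((f * g) $ k) * r ^ k \<le> a * b"
    using r by (simp add: pos_le_divide_eq)
qed

lemma gauss_norm_le_inverse:
  assumes r: "0 < r" and f0: "f $ 0 \<noteq> 0" and f: "gauss_norm_le r f (absv (f $ 0))"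
  shows "gauss_norm_le r (inverse f) (inverse (absv (f $ 0)))"
  unfolding gauss_norm_le_def
proof
  fix k
  have f0_pos: "absv (f $ 0) > 0"
    using f0 by (rule absv_pos)
  show "absv (inverse f $ k) * r ^ k \<le> inverse (absv (f $ 0))"
  proof (induction k rule: less_induct)
    case (less k)
    show ?case
    proof (cases k)
      case 0
      then show ?thesis by (simp add: absv_inverse)
    next
      case (Suc j)
      define S where "S = (\<Sum>i=1..k. f $ i * inverse f $ (k - i))"
      have "{0..k} = insert 0 {1..k}" by auto
      then have "f $ 0 * inverse f $ k + S = (f * inverse f) $ k"
        unfolding fps_mult_nth S_def by simp
      also have "\<dots> = 0"
        using inverse_mult_eq_1'[OF f0] Suc by simp
      finally have "absv (f $ 0) * absv (inverse f $ k) = absv S"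
        by (simp add: absv_mult[symmetric] eq_neg_iff_add_eq_0[symmetric])
      moreover have "absv S \<le> 1 / r ^ k"
        unfolding S_def
      proof (intro absv_sum_le)
        fix i assume i: "i \<in> {1..k}"
        have "absv (f $ i * inverse f $ (k - i)) * r ^ k
            = (absv (f $ i) * r ^ i) * (absv (inverse f $ (k - i)) * r ^ (k - i))"
          using i by (simp add: absv_mult power_add[symmetric] mult_ac)
        also have "\<dots> \<le> absv (f $ 0) * inverse (absv (f $ 0))"
          using f i r less.IH[of "k - i"] unfolding gauss_norm_le_def
          by (intro mult_mono) auto
        finally show "absv (f $ i * inverse f $ (k - i)) \<le> 1 / r ^ k"
          using f0 r by (simp add: pos_le_divide_eq mult.commute)
      qed (use r in simp)
      ultimately show ?thesis
        using f0_pos r by (simp add: field_simps)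
    qed
  qed
qed

lemma absv_poly_eq_of_gauss_norm_le:
  assumes r: "0 < r" and F: "gauss_norm_le r (fps_of_poly F) (absv (poly F 0))"
    and t: "absv t < r"
  shows "absv (poly F t) = absv (poly F 0)"
proof (cases "poly F 0 = 0")
  case True
  have "absv (coeff F k) * r ^ k \<le> 0" for k
    using F True unfolding gauss_norm_le_def by simp
  then have "coeff F k = 0" for k
    using r absv_pos[of "coeff F k"] by (meson not_le mult_pos_pos zero_less_power)
  then show ?thesis
    by (simp add: poly_altdef)
next
  case False
  have "poly F t = poly F 0 + (\<Sum>i\<in>{1..degree F}. coeff F i * t ^ i)"
    unfolding poly_altdef atMost_atLeast0 by (simp add: sum.atLeast_Suc_atMost poly_0_coeff_0)
  also have "absv \<dots> = absv (poly F 0)"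
  proof (rule absv_add_eq_left, rule absv_sum_less)
    fix i :: nat assume i: "i \<in> {1..degree F}"
    show "absv (coeff F i * t ^ i) < absv (poly F 0)"
    proof (cases "coeff F i = 0")
      case False
      have "absv (coeff F i * t ^ i) = absv (coeff F i) * absv t ^ i"
        by (simp add: absv_mult absv_power)
      also have "\<dots> < absv (coeff F i) * r ^ i"
        using t i False absv_pos by (intro mult_strict_left_mono power_strict_mono) auto
      also have "\<dots> \<le> absv (poly F 0)"
        using F unfolding gauss_norm_le_def by simp
      finally show ?thesis .
    qed (use \<open>poly F 0 \<noteq> 0\<close> absv_pos in simp)
  qed (use False absv_pos in auto)
  finally show ?thesis .
qed

text \<open>Over an algebraically closed field this says that f is monic with all roots in the
  open disk of radius r.\<close>

definition distinguished :: "real \<Rightarrow> 'a poly \<Rightarrow> bool" where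
  "distinguished r f \<longleftrightarrow>
     lead_coeff f = 1 \<and> (\<forall>i<degree f. absv (coeff f i) * r ^ i < r ^ degree f)"

lemma distinguished_coeff_le:
  assumes "0 < r" and "distinguished r f"
  shows "absv (coeff f i) * r ^ i \<le> r ^ degree f"
  using assms unfolding distinguished_def
  by (cases i "degree f" rule: linorder_cases) (auto simp: coeff_eq_0 less_imp_le)

lemma distinguished_1: "distinguished r 1"
  by (simp add: distinguished_def)

lemma distinguished_linear: "absv a < r \<Longrightarrow> distinguished r [:a, 1:]"
  by (simp add: distinguished_def)

lemma distinguished_mult:
  assumes r: "0 < r" and f: "distinguished r f" and g: "distinguished r g"
  shows "distinguished r (f * g)"
proof -
  have "f \<noteq> 0" "g \<noteq> 0"
    using f g by (auto simp: distinguished_def)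
  then have deg: "degree (f * g) = degree f + degree g"
    by (rule degree_mult_eq)
  have "absv (coeff (f * g) k) * r ^ k < r ^ degree (f * g)" if k: "k < degree (f * g)" for k
  proof -
    have "absv (coeff f i * coeff g (k - i)) < r ^ degree (f * g) / r ^ k" if i: "i \<le> k" for i
    proof -
      define a b where "a = absv (coeff f i) * r ^ i" and "b = absv (coeff g (k - i)) * r ^ (k - i)"
      have ab: "0 \<le> a" "a \<le> r ^ degree f" "0 \<le> b" "b \<le> r ^ degree g"
        using r f g by (auto simp: a_def b_def distinguished_coeff_le)
      have "i < degree f \<or> k - i < degree g"
        using i k deg by linarith
      then have "a < r ^ degree f \<or> b < r ^ degree g"
        using f g unfolding a_def b_def distinguished_def by auto
      then have "a * b < r ^ degree f * r ^ degree g"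
        using ab r by (smt (verit) mult_left_mono mult_right_mono mult_strict_left_mono
            mult_strict_right_mono zero_less_power)
      moreover have "absv (coeff f i * coeff g (k - i)) * r ^ k = a * b"
        using i by (simp add: a_def b_def absv_mult power_add[symmetric] mult_ac)
      ultimately show ?thesis
        using r by (simp add: deg power_add pos_less_divide_eq)
    qed
    then have "absv (coeff (f * g) k) < r ^ degree (f * g) / r ^ k"
      unfolding coeff_mult using r by (intro absv_sum_less) auto
    then show ?thesis
      using r by (simp add: pos_less_divide_eq)
  qed
  moreover have "lead_coeff (f * g) = 1"
    using f g by (simp add: distinguished_def lead_coeff_mult)
  ultimately show ?thesis
    unfolding distinguished_def by blast
qed

lemma distinguished_power: "0 < r \<Longrightarrow> distinguished r f \<Longrightarrow> distinguished r (f ^ k)"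
  by (induction k) (simp_all add: distinguished_1 distinguished_mult)

lemma distinguished_prod:
  "0 < r \<Longrightarrow> (\<And>i. i \<in> S \<Longrightarrow> distinguished r (f i)) \<Longrightarrow> distinguished r (prod f S)"
  by (induction S rule: infinite_finite_induct) (simp_all add: distinguished_1 distinguished_mult)

lemma absv_poly_distinguished_le:
  assumes r: "0 < r" and f: "distinguished r f" and t: "absv t < r"
  shows "absv (poly f t) \<le> r ^ degree f"
  unfolding poly_altdef
proof (rule absv_sum_le)
  fix i
  have "absv (coeff f i * t ^ i) \<le> absv (coeff f i) * r ^ i"
    using t by (simp add: absv_mult absv_power mult_left_mono power_mono)
  also have "\<dots> \<le> r ^ degree f"
    using r f by (rule distinguished_coeff_le)
  finally show "absv (coeff f i * t ^ i) \<le> r ^ degree f" .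
qed (use r in simp)

lemma absv_nth_mult_distinguished:
  assumes r: "0 < r" and f: "distinguished r f"
    and H0: "H $ 0 \<noteq> 0" and H: "gauss_norm_le r H (absv (H $ 0))"
  shows "absv ((fps_of_poly f * H) $ degree f) = absv (H $ 0)"
proof -
  have "{0..degree f} = insert (degree f) {0..<degree f}" by auto
  then have "(fps_of_poly f * H) $ degree f
      = H $ 0 + (\<Sum>i\<in>{0..<degree f}. coeff f i * H $ (degree f - i))"
    using f unfolding fps_mult_nth distinguished_def by simp
  also have "absv \<dots> = absv (H $ 0)"
  proof (rule absv_add_eq_left, rule absv_sum_less)
    fix i assume i: "i \<in> {0..<degree f}"
    have "absv (coeff f i * H $ (degree f - i)) * r ^ degree f
        = (absv (coeff f i) * r ^ i) * (absv (H $ (degree f - i)) * r ^ (degree f - i))"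
      using i by (simp add: absv_mult power_add[symmetric] mult_ac)
    also have "\<dots> < r ^ degree f * absv (H $ 0)"
      using f i H r H0 absv_pos unfolding distinguished_def gauss_norm_le_def
      by (intro order.strict_trans1[OF mult_left_mono mult_strict_right_mono]) auto
    finally show "absv (coeff f i * H $ (degree f - i)) < absv (H $ 0)"
      using r by (simp add: mult.commute)
  qed (use H0 absv_pos in auto)
  finally show ?thesis .
qed

end

section \<open>Zero-free polynomials and the distortion estimate\<close>

locale alg_closed_nonarch_abs = nonarch_abs +
  assumes poly_has_root: "0 < degree (q :: 'a poly) \<Longrightarrow> \<exists>z. poly q z = 0"
begin

lemma gauss_norm_le_no_roots:
  assumes r: "0 < r" and no_root: "\<And>t. absv t < r \<Longrightarrow> poly F t \<noteq> 0"
  shows "gauss_norm_le r (fps_of_poly F) (absv (poly F 0))"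
  using no_root
proof (induction "degree F" arbitrary: F rule: less_induct)
  case less
  show ?case
  proof (cases "degree F = 0")
    case True
    then show ?thesis
      unfolding gauss_norm_le_def poly_0_coeff_0 fps_of_poly_nth
    proof (intro allI)
      fix k
      show "absv (coeff F k) * r ^ k \<le> absv (coeff F 0)"
        using True by (cases k) (simp_all add: coeff_eq_0)
    qed
  next
    case False
    then obtain b where "poly F b = 0"
      using poly_has_root[of F] by auto
    then obtain F1 where F: "F = [:- b, 1:] * F1"
      by (metis dvdE poly_eq_0_iff_dvd)
    have "F1 \<noteq> 0"
      using less.prems[of 0] r F by auto
    then have "degree F1 < degree F"
      using degree_mult_eq[of "[:- b, 1:]" F1] by (simp add: F)
    moreover have "\<And>t. absv t < r \<Longrightarrow> poly F1 t \<noteq> 0"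
      using less.prems by (simp add: F)
    ultimately have F1: "gauss_norm_le r (fps_of_poly F1) (absv (poly F1 0))"
      by (rule less.hyps)
    have "r \<le> absv b"
      using less.prems[of b] \<open>poly F b = 0\<close> by force
    then have "gauss_norm_le r (fps_of_poly [:- b, 1:]) (absv b)"
      by (auto simp: gauss_norm_le_def coeff_pCons split: nat.split)
    from gauss_norm_le_mult[OF r this F1] show ?thesis
      unfolding F fps_of_poly_mult by (simp add: absv_mult)
  qed
qed

lemma absv_poly_no_roots_eq:
  assumes "0 < r" and "\<And>t. absv t < r \<Longrightarrow> poly F t \<noteq> 0" and "absv t < r"
  shows "absv (poly F t) = absv (poly F 0)"
  using assms by (intro absv_poly_eq_of_gauss_norm_le gauss_norm_le_no_roots)

lemma absv_quotient_distinguished_le: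
  assumes r: "0 < r" and F: "distinguished r F"
    and Go: "\<And>t. absv t < r \<Longrightarrow> poly Go t \<noteq> 0"
    and Q: "\<And>t. absv t < r \<Longrightarrow> poly Q t \<noteq> 0"
    and t: "absv t < r"
  shows "absv (poly (F * Go) t / poly Q t) \<le> absv (poly Go 0 / poly Q 0) * r ^ degree F"
proof -
  have "absv (poly (F * Go) t / poly Q t) = absv (poly F t) * absv (poly Go 0 / poly Q 0)"
    using absv_poly_no_roots_eq[OF r Go t] absv_poly_no_roots_eq[OF r Q t]
    by (simp add: absv_mult absv_divide)
  also have "\<dots> \<le> r ^ degree F * absv (poly Go 0 / poly Q 0)"
    using absv_poly_distinguished_le[OF r F t] by (simp add: mult_right_mono)
  finally show ?thesis
    by (simp add: mult.commute)
qed

lemma taylor_coeff_deriv_estimate: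
  assumes r: "0 < r" and F: "distinguished r F"
    and Go: "\<And>t. absv t < r \<Longrightarrow> poly Go t \<noteq> 0"
    and Q: "\<And>t. absv t < r \<Longrightarrow> poly Q t \<noteq> 0"
    and W: "\<And>t. absv t < r \<Longrightarrow> poly W t \<noteq> 0"
    and W_def: "W = pderiv (F * Go) * Q - F * Go * pderiv Q"
  shows "absv (of_nat (degree F)) * absv (poly Go 0 / poly Q 0) * r ^ (degree F - 1)
           \<le> absv (poly W 0 / poly Q 0 ^ 2)"
proof (cases "degree F = 0")
  case False
  define n where "n = degree F"
  define B where "B = fps_of_poly Q"
  define H where "H = fps_of_poly Go * inverse B"
  define c where "c = fps_of_poly (F * Go) / B"
  have B0: "B $ 0 = poly Q 0" and B0_nz: "B $ 0 \<noteq> 0"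
    using Q[of 0] r by (simp_all add: B_def poly_0_coeff_0)
  have inverse_B: "gauss_norm_le r (inverse B) (inverse (absv (poly Q 0)))"
    using gauss_norm_le_inverse[OF r B0_nz] gauss_norm_le_no_roots[OF r Q]
    by (simp add: B0 B_def poly_0_coeff_0)
  have H0: "H $ 0 = poly Go 0 / poly Q 0"
    by (simp add: H_def B0 poly_0_coeff_0 divide_inverse)
  have "gauss_norm_le r H (absv (poly Go 0) * inverse (absv (poly Q 0)))"
    unfolding H_def using gauss_norm_le_no_roots[OF r Go] inverse_B by (rule gauss_norm_le_mult[OF r])
  then have H: "gauss_norm_le r H (absv (H $ 0))"
    by (simp add: H0 absv_mult absv_inverse divide_inverse)
  have "c = fps_of_poly F * H"
    using B0_nz by (simp add: c_def H_def fps_of_poly_mult fps_divide_unit mult.assoc)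
  then have c_n: "absv (c $ n) = absv (poly Go 0 / poly Q 0)"
    using absv_nth_mult_distinguished[OF r F _ H] H0 Go[of 0] Q[of 0] r by (simp add: n_def)
  have "fps_deriv c = fps_of_poly W / B ^ 2"
    using B0_nz unfolding c_def W_def B_def
    by (simp add: fps_divide_deriv fps_of_poly_mult fps_of_poly_diff fps_of_poly_pderiv)
  also have "\<dots> = fps_of_poly W * (inverse B * inverse B)"
    using B0_nz by (simp add: fps_divide_unit power2_eq_square fps_inverse_mult)
  finally have c_deriv: "fps_deriv c = fps_of_poly W * (inverse B * inverse B)" .
  have "gauss_norm_le r (fps_deriv c)
      (absv (poly W 0) * (inverse (absv (poly Q 0)) * inverse (absv (poly Q 0))))"
    unfolding c_deriv using r gauss_norm_le_no_roots[OF r W] inverse_B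
    by (intro gauss_norm_le_mult)
  moreover have "absv (poly W 0) * (inverse (absv (poly Q 0)) * inverse (absv (poly Q 0)))
      = absv (poly W 0 / poly Q 0 ^ 2)"
    by (simp add: absv_mult absv_inverse power2_eq_square divide_inverse)
  ultimately have "absv (fps_deriv c $ (n - 1)) * r ^ (n - 1) \<le> absv (poly W 0 / poly Q 0 ^ 2)"
    unfolding gauss_norm_le_def by metis
  moreover have "fps_deriv c $ (n - 1) = of_nat n * c $ n"
    using False by (simp add: n_def del: of_nat_Suc)
  ultimately have "absv (of_nat n * c $ n) * r ^ (n - 1) \<le> absv (poly W 0 / poly Q 0 ^ 2)"
    by metis
  then show ?thesis
    unfolding absv_mult c_n by (simp add: n_def)
qed simp

lemma distinguished_distortion_bound:
  assumes r: "0 < r" and F: "distinguished r F"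
    and Go: "\<And>t. absv t < r \<Longrightarrow> poly Go t \<noteq> 0"
    and Q: "\<And>t. absv t < r \<Longrightarrow> poly Q t \<noteq> 0"
    and W: "\<And>t. absv t < r \<Longrightarrow> poly W t \<noteq> 0"
    and W_def: "W = pderiv (F * Go) * Q - F * Go * pderiv Q"
    and t: "absv t < r"
  shows "absv (of_nat (degree F)) * absv (poly (F * Go) t / poly Q t)
           \<le> r * absv (poly W 0 / poly Q 0 ^ 2)"
proof (cases "degree F = 0")
  case False
  have "absv (of_nat (degree F)) * absv (poly (F * Go) t / poly Q t)
      \<le> absv (of_nat (degree F)) * (absv (poly Go 0 / poly Q 0) * r ^ degree F)"
    using absv_quotient_distinguished_le[OF r F Go Q t] by (simp add: mult_left_mono)
  also have "\<dots> = r * (absv (of_nat (degree F)) * absv (poly Go 0 / poly Q 0) * r ^ (degree F - 1))"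
    using False by (simp add: power_eq_if)
  also have "\<dots> \<le> r * absv (poly W 0 / poly Q 0 ^ 2)"
    using taylor_coeff_deriv_estimate[OF r F Go Q W W_def] r by simp
  finally show ?thesis .
qed (use r in simp)

lemma absv_poly_no_roots_eq_disk:
  assumes "0 < r" and "\<And>z. z \<in> open_disk absv c r \<Longrightarrow> poly F z \<noteq> 0"
    and "x \<in> open_disk absv c r"
  shows "absv (poly F x) = absv (poly F c)"
  using absv_poly_no_roots_eq[of r "pcompose F [:c, 1:]" "x - c"] assms
  by (simp add: poly_pcompose open_disk_iff)

lemma disk_root_factorization:
  assumes r: "0 < r" and "G \<noteq> 0"
  obtains F Go where "G = F * Go" and "distinguished r (pcompose F [:c, 1:])"
    and "degree F = (\<Sum>z\<in>{z \<in> open_disk absv c r. poly G z = 0}. order z G)"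
    and "\<And>z. z \<in> open_disk absv c r \<Longrightarrow> poly Go z \<noteq> 0"
proof -
  define Z where "Z = {z \<in> open_disk absv c r. poly G z = 0}"
  define F where "F = (\<Prod>z\<in>Z. [:- z, 1:] ^ order z G)"
  have "finite Z"
    using poly_roots_finite[OF \<open>G \<noteq> 0\<close>] by (simp add: Z_def)
  then obtain Go where G: "G = F * Go" and Go: "\<And>z. z \<in> Z \<Longrightarrow> poly Go z \<noteq> 0"
    using poly_factor_roots \<open>G \<noteq> 0\<close> unfolding F_def by blast
  have "pcompose [:- z, 1:] [:c, 1:] = [:c - z, 1:]" for z
    by (simp add: pcompose_pCons)
  moreover have "absv (c - z) < r" if "z \<in> Z" for z
    using that by (simp add: Z_def open_disk_iff absv_minus_commute)
  ultimately have "distinguished r (pcompose F [:c, 1:])"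
    unfolding F_def pcompose_prod pcompose_power
    by (auto intro!: distinguished_prod distinguished_power distinguished_linear r)
  moreover have "degree F = (\<Sum>z\<in>Z. order z G)"
    by (simp add: F_def degree_prod_sum_eq degree_linear_power)
  moreover have "poly Go z \<noteq> 0" if "z \<in> open_disk absv c r" for z
    using Go[of z] that by (auto simp: Z_def G)
  ultimately show ?thesis
    using that G unfolding Z_def by blast
qed

lemma preimage_count_dist_le_deriv:
  fixes P Q :: "'a poly"
  assumes r: "0 < r" and G_nz: "P - smult y Q \<noteq> 0"
    and no_pole: "\<And>z. z \<in> open_disk absv c r \<Longrightarrow> poly Q z \<noteq> 0"
    and no_crit: "open_disk absv c r \<inter> crit_finite P Q = {}"
    and x: "x \<in> open_disk absv c r" and u: "u \<in> open_disk absv c r"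
  shows "absv (of_nat (preimage_count P Q (open_disk absv c r) y)) * absv (rat_eval P Q u - y)
           \<le> r * absv (rat_deriv P Q x)"
proof -
  define D where "D = open_disk absv c r"
  define G where "G = P - smult y Q"
  define W where "W = pderiv P * Q - P * pderiv Q"
  define shift where "shift F = pcompose F [:c, 1:]" for F :: "'a poly"
  obtain F Go where G: "G = F * Go" and F: "distinguished r (shift F)"
    and deg: "degree F = (\<Sum>z\<in>{z \<in> D. poly G z = 0}. order z G)"
    and Go: "\<And>z. z \<in> D \<Longrightarrow> poly Go z \<noteq> 0"
    using disk_root_factorization[OF r G_nz[folded G_def]] unfolding D_def shift_def by blast
  have W: "poly W z \<noteq> 0" if "z \<in> D" for z
    using no_crit no_pole that unfolding D_def crit_finite_def W_def by blast
  have shift_poly: "poly (shift H) t = poly H (c + t)" for H t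
    by (simp add: shift_def poly_pcompose)
  have shift_no_roots: "poly (shift H) t \<noteq> 0"
    if "\<And>z. z \<in> D \<Longrightarrow> poly H z \<noteq> 0" and "absv t < r" for H t
    using that by (simp add: shift_poly D_def open_disk_iff)
  have "shift W = pderiv (shift F * shift Go) * shift Q - shift F * shift Go * pderiv (shift Q)"
  proof -
    have "W = pderiv G * Q - G * pderiv Q"
      by (simp add: W_def G_def pderiv_diff pderiv_smult algebra_simps)
    moreover have "shift G = shift F * shift Go"
      by (simp add: shift_def G pcompose_mult)
    moreover have "pderiv (shift H) = shift (pderiv H)" for H
      by (simp add: shift_def pderiv_pcompose pderiv_pCons)
    ultimately show ?thesis
      by (metis shift_def pcompose_mult pcompose_diff)
  qed
  then have "absv (of_nat (degree (shift F)))
        * absv (poly (shift F * shift Go) (u - c) / poly (shift Q) (u - c))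
      \<le> r * absv (poly (shift W) 0 / poly (shift Q) 0 ^ 2)"
    using u unfolding D_def open_disk_iff
    by (intro distinguished_distortion_bound[OF r F] shift_no_roots Go no_pole W) (auto simp: D_def)
  moreover have "degree (shift F) = preimage_count P Q D y"
    by (simp add: shift_def degree_pcompose deg preimage_count_def G_def)
  moreover have "poly (shift F * shift Go) (u - c) / poly (shift Q) (u - c) = rat_eval P Q u - y"
  proof -
    have "poly F u * poly Go u = poly P u - y * poly Q u"
      by (metis G G_def poly_mult poly_diff poly_smult)
    then show ?thesis
      using no_pole[OF u] by (simp add: shift_poly rat_eval_def field_simps)
  qed
  moreover have "absv (rat_deriv P Q x) = absv (poly (shift W) 0 / poly (shift Q) 0 ^ 2)"
    using absv_poly_no_roots_eq_disk[OF r _ x, of W] absv_poly_no_roots_eq_disk[OF r _ x, of Q]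
      W no_pole
    by (simp add: rat_deriv_def W_def[symmetric] shift_poly absv_divide absv_power D_def)
  ultimately show ?thesis
    by (simp add: D_def)
qed

lemma preimage_count_diam_le_deriv:
  fixes P Q :: "'a poly"
  assumes r: "0 < r" and G_nz: "P - smult y Q \<noteq> 0"
    and no_pole: "\<And>z. z \<in> open_disk absv c r \<Longrightarrow> poly Q z \<noteq> 0"
    and no_crit: "open_disk absv c r \<inter> crit_finite P Q = {}"
    and x: "x \<in> open_disk absv c r"
  shows "absv (of_nat (preimage_count P Q (open_disk absv c r) y))
           * diam_abs absv (rat_eval P Q ` open_disk absv c r)
         \<le> r * absv (rat_deriv P Q x)"
proof (cases "of_nat (preimage_count P Q (open_disk absv c r) y) = (0 :: 'a)")
  case False
  define N where "N = absv (of_nat (preimage_count P Q (open_disk absv c r) y) :: 'a)"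
  have "0 < N"
    using False absv_pos by (simp add: N_def)
  have "diam_abs absv (rat_eval P Q ` open_disk absv c r) \<le> r * absv (rat_deriv P Q x) / N"
  proof (rule diam_abs_le[where c = y])
    fix v assume "v \<in> rat_eval P Q ` open_disk absv c r"
    then show "absv (v - y) \<le> r * absv (rat_deriv P Q x) / N"
      using preimage_count_dist_le_deriv[OF r G_nz no_pole no_crit x] \<open>0 < N\<close>
      by (auto simp: N_def pos_le_divide_eq mult.commute)
  qed (use x in blast)
  then show ?thesis
    using \<open>0 < N\<close> by (simp add: N_def pos_le_divide_eq mult.commute)
qed (use r in simp)

end

section \<open>The absolute value of C_p\<close>

locale Cp_abs = alg_closed_nonarch_abs +
  fixes p :: nat
  assumes prime_p: "prime p"
    and absv_of_nat: "0 < m \<Longrightarrow> absv (of_nat m) = 1 / real p ^ multiplicity p m"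
begin

lemma p_gt_1: "1 < real p"
  using prime_gt_1_nat[OF prime_p] by simp

lemma absv_of_nat_ge:
  assumes "1 \<le> n"
  shows "real p powr (- ((real n - 1) / (real p - 1))) \<le> absv (of_nat n)"
proof -
  define v where "v = multiplicity p n"
  have "1 + real v * (real p - 1) \<le> real p ^ v"
    using Bernoulli_inequality[of "real p - 1" v] p_gt_1 by simp
  also have "real p ^ v \<le> real n"
    using assms multiplicity_dvd[of p n] unfolding v_def
    by (metis dvd_imp_le of_nat_le_iff of_nat_power less_le_trans zero_less_one)
  finally have "real v \<le> (real n - 1) / (real p - 1)"
    using p_gt_1 by (simp add: pos_le_divide_eq)
  then have "real p powr (- ((real n - 1) / (real p - 1))) \<le> real p powr (- real v)"
    using p_gt_1 by (intro powr_mono) auto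
  also have "\<dots> = absv (of_nat n)"
    using assms p_gt_1 by (simp add: absv_of_nat v_def powr_minus_divide powr_realpow)
  finally show ?thesis .
qed

lemma absv_root_of_p:
  assumes "0 < k"
  obtains \<pi> where "absv \<pi> = real p powr (- 1 / real k)"
proof -
  have "degree (monom 1 k + [:- of_nat p:] :: 'a poly) = k"
    using assms by (simp add: degree_add_eq_left degree_monom_eq)
  then obtain \<pi> :: 'a where "\<pi> ^ k = of_nat p"
    using poly_has_root[of "monom 1 k + [:- of_nat p:]"] assms by (auto simp: poly_monom)
  then have "absv \<pi> ^ k = 1 / real p"
    using absv_of_nat[of p] prime_gt_0_nat[OF prime_p] prime_p
    by (simp add: absv_power[symmetric])
  also have "\<dots> = (real p powr (- 1 / real k)) ^ k"
  proof -
    have "(real p powr (- 1 / real k)) ^ k = real p powr (real k * (- 1 / real k))"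
      using p_gt_1 by (intro powr_power) simp
    also have "real k * (- 1 / real k) = - 1"
      using assms by simp
    finally show ?thesis
      using p_gt_1 by (simp add: powr_minus_divide)
  qed
  finally have "absv \<pi> = real p powr (- 1 / real k)"
    using assms p_gt_1 by (auto intro: power_eq_imp_eq_base[of _ k])
  then show ?thesis
    by (rule that)
qed

lemma absv_dense:
  assumes "\<rho> < r" and "0 < r"
  obtains w where "\<rho> < absv w" and "absv w < r"
proof -
  define \<rho>' where "\<rho>' = max \<rho> (r / 2)"
  have "0 < \<rho>'" "\<rho>' < r"
    using assms by (auto simp: \<rho>'_def)
  then have "log p \<rho>' < log p r"
    using p_gt_1 by simp
  then obtain q where "q \<in> \<rat>" and q: "log p \<rho>' < q" "q < log p r"
    using Rats_dense_in_real by blast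
  then obtain a b where b: "0 < b" and "q = of_int a / of_int b"
    by (auto elim: Rats_cases')
  then have q_eq: "q = - 1 / real (nat b) * real_of_int (- a)"
    by simp
  obtain \<pi> where \<pi>: "absv \<pi> = real p powr (- 1 / real (nat b))"
    using absv_root_of_p[of "nat b"] b by auto
  have "absv (\<pi> powi (- a)) = real p powr q"
    using p_gt_1 by (simp add: absv_power_int \<pi> q_eq powr_real_of_int'[symmetric] powr_powr)
  moreover have "\<rho>' < real p powr q"
    using q(1) p_gt_1 \<open>0 < \<rho>'\<close> by (subst (asm) log_less_iff) auto
  moreover have "real p powr q < r"
    using q(2) p_gt_1 \<open>0 < r\<close> by (subst (asm) less_log_iff) auto
  ultimately show ?thesis
    using that[of "\<pi> powi (- a)"] by (simp add: \<rho>'_def)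
qed

lemma powr_degree_ratio_le:
  assumes "1 \<le> n" and "0 < r" and "0 \<le> L" and "absv (of_nat n) * s \<le> r * L"
  shows "real p powr (- (real n / (real p - 1))) * s / (real p powr (- (1 / (real p - 1))) * r) \<le> L"
proof -
  define K where "K = real p powr (- ((real n - 1) / (real p - 1)))"
  have K: "0 < K" "K \<le> absv (of_nat n)"
    using p_gt_1 absv_of_nat_ge[OF assms(1)] by (simp_all add: K_def)
  have "real p powr (- (real n / (real p - 1))) / real p powr (- (1 / (real p - 1))) = K"
    unfolding K_def powr_diff[symmetric] by (simp add: diff_divide_distrib)
  then have "real p powr (- (real n / (real p - 1))) * s / (real p powr (- (1 / (real p - 1))) * r)
      = K * s / r"
    unfolding times_divide_times_eq[symmetric] by simp
  also have "\<dots> \<le> L"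
  proof (cases "0 \<le> s")
    case True
    then have "K * s \<le> r * L"
      using K assms(4) by (meson mult_right_mono order_trans)
    then show ?thesis
      using assms(2) by (simp add: pos_divide_le_eq mult.commute)
  next
    case False
    then have "K * s \<le> 0"
      using K by (simp add: mult_nonneg_nonpos)
    then show ?thesis
      using assms(2,3) by (simp add: pos_divide_le_eq order_trans[OF _ mult_nonneg_nonneg])
  qed
  finally show ?thesis .
qed

lemma diam_abs_open_disk:
  assumes r: "0 < r"
  shows "diam_abs absv (open_disk absv c r) = r"
proof (rule antisym)
  have bound: "absv (u - c) \<le> r" if "u \<in> open_disk absv c r" for u
    using that by (simp add: open_disk_iff)
  show "diam_abs absv (open_disk absv c r) \<le> r"
    using r bound open_disk_iff[of c c r] by (intro diam_abs_le) auto
  show "r \<le> diam_abs absv (open_disk absv c r)"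
  proof (rule dense_le)
    fix \<rho> assume "\<rho> < r"
    then obtain w where w: "\<rho> < absv w" "absv w < r"
      using absv_dense r by blast
    then have "absv ((c + w) - c) \<le> diam_abs absv (open_disk absv c r)"
      using r by (intro diam_abs_ge[OF bound]) (simp_all add: open_disk_iff)
    then show "\<rho> \<le> diam_abs absv (open_disk absv c r)"
      using w by simp
  qed
qed

end

lemma is_Cp_imp_Cp_abs:
  assumes "is_Cp p absv"
  shows "Cp_abs absv p"
proof unfold_locales
  note Cp = assms[unfolded is_Cp_def]
  fix x y :: 'a and q :: "'a poly" and m :: nat
  show "0 \<le> absv x" "absv x = 0 \<longleftrightarrow> x = 0" "absv (x * y) = absv x * absv y"
    "absv (x + y) \<le> max (absv x) (absv y)" "prime p"
    using Cp by simp_all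
  show "0 < degree q \<Longrightarrow> \<exists>z. poly q z = 0"
    using Cp by simp
  show "0 < m \<Longrightarrow> absv (of_nat m) = 1 / real p ^ multiplicity p m"
    using Cp by simp
qed

theorem proposition2p6:
  fixes p :: nat and absv :: "'a::field \<Rightarrow> real"
    and P Q :: "'a poly" and x a :: 'a and r :: real and D :: "'a set"
  assumes Cp: "is_Cp p absv"
    and Q_nz: "Q \<noteq> 0" and cop: "coprime P Q"
    and noncst: "degree P \<ge> 1 \<or> degree Q \<ge> 1"
    and x_ncrit: "x \<notin> crit_finite P Q"
    and r_pos: "r > 0" and D_def: "D = open_disk absv a r" and xD: "x \<in> D"
    and D_ncrit: "D \<inter> crit_finite P Q = {}"
    and no_pole: "\<forall>z\<in>D. poly Q z \<noteq> 0"
  shows "absv (rat_deriv P Q x) \<ge>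
           (real p powr (- (real (degree_on P Q D) / (real p - 1)))
              * diam_abs absv (rat_eval P Q ` D))
         / (real p powr (- (1 / (real p - 1))) * diam_abs absv D)"
proof -
  \<comment> \<open>Q_nz and x_ncrit are implied by no_pole and D_ncrit.\<close>
  interpret Cp_abs absv p
    using Cp by (rule is_Cp_imp_Cp_abs)
  define y where "y = (SOME y. y \<in> rat_eval P Q ` D)"
  have "\<exists>y. y \<in> rat_eval P Q ` D"
    using xD by (intro exI[of _ "rat_eval P Q x"] imageI)
  then have "y \<in> rat_eval P Q ` D"
    unfolding y_def by (rule someI_ex)
  then obtain c where c: "c \<in> D" "rat_eval P Q c = y"
    by blast
  have D_c: "D = open_disk absv c r"
    using c(1) unfolding D_def by (rule open_disk_recenter)
  have G: "P - smult y Q \<noteq> 0"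
    using cop noncst by (rule rat_map_nonconstant)
  have n: "degree_on P Q D = preimage_count P Q D y"
    by (simp add: degree_on_def y_def)
  have "1 \<le> preimage_count P Q D y"
    using preimage_count_pos[OF G c(1)] c no_pole by (simp add: rat_eval_def field_simps)
  moreover have "absv (of_nat (preimage_count P Q D y)) * diam_abs absv (rat_eval P Q ` D)
      \<le> r * absv (rat_deriv P Q x)"
    using preimage_count_diam_le_deriv[OF r_pos G, of c x] no_pole D_ncrit xD by (simp add: D_c)
  ultimately show ?thesis
    using powr_degree_ratio_le[OF _ r_pos] diam_abs_open_disk[OF r_pos, of c]
    by (simp add: n D_c[symmetric])
qed

end
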